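(* Let $\beta,\gamma$ be real numbers with $0<\beta\le\gamma\le1$, let $m\ge0$ be an integer, let $\theta=(k_r)$ be a lacunary sequence and let $0<p<\infty$. Then $N_\theta^\beta(p,F,\Delta^m)\subset S_\theta^\gamma(F,\Delta^m)$ (and a sequence strongly $N_\theta^\beta(p,F,\Delta^m)$-summable to $X_0$ is $S_\theta^\gamma(F,\Delta^m)$-statistically convergent to $X_0$). Moreover, the inclusion is strict for some choices of $\beta$ and $\gamma$.
   Context: A fuzzy number is a map $X:\mathbb{R}\to[0,1]$ which is normal, fuzzy convex, upper semicontinuous, with compact closure of $\{t:X(t)>0\}$; $L(\mathbb{R})$ is the set of fuzzy numbers. Level sets $[X]^\alpha=\{t:X(t)\ge\alpha\}$ ($\alpha\in(0,1]$), $[X]^0=\overline{\{t:X(t)>0\}}$, are compact intervals $[u^\alpha,v^\alpha]$. Subtraction: $[X-Y]^\alpha=[u_1^\alpha-v_2^\alpha,v_1^\alpha-u_2^\alpha]$. Metric: $d(X,Y)=\sup_{\alpha\in[0,1]}\max\{|u_1^\alpha-u_2^\alpha|,|v_1^\alpha-v_2^\alpha|\}$. $(\Delta^0X)_k=X_k$, $(\Delta^1X)_k=X_k-X_{k+1}$, $(\Delta^mX)_k=(\Delta^1(\Delta^{m-1}X))_k$. A lacunary sequence is an increasing integer sequence $\theta=(k_r)_{r\ge0}$ with $k_0=0$, $h_r=k_r-k_{r-1}\to\infty$; $I_r=(k_{r-1},k_r]$. $S_\theta^\gamma(F,\Delta^m)$: sequences $X$ with some $X_0\in L(\mathbb{R})$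 such that for all $\varepsilon>0$, $\lim_r\frac{1}{h_r^\gamma}|\{k\in I_r:d(\Delta^mX_k,X_0)\ge\varepsilon\}|=0$. $N_\theta^\beta(p,F,\Delta^m)$: sequences $X$ with some $X_0\in L(\mathbb{R})$ (the limit) such that $\lim_r\frac{1}{h_r^\beta}\sum_{k\in I_r}d(\Delta^mX_k,X_0)^p=0$. *)

theory Defs
  imports "HOL-Analysis.Analysis"
begin

type_synonym fuzzy = "real \<Rightarrow> real"

definition usc :: "fuzzy \<Rightarrow> bool" where
  "usc X \<longleftrightarrow> (\<forall>t c. X t < c \<longrightarrow> (\<forall>\<^sub>F s in at t. X s < c))"

definition fuzzy_number :: "fuzzy \<Rightarrow> bool" where
  "fuzzy_number X \<longleftrightarrow>
     (\<forall>t. 0 \<le> X t \<and> X t \<le> 1) \<and>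
     (\<exists>t. X t = 1) \<and>
     (\<forall>x y l. 0 \<le> l \<and> l \<le> 1 \<longrightarrow> min (X x) (X y) \<le> X (l * x + (1 - l) * y)) \<and>
     usc X \<and>
     compact (closure {t. X t > 0})"

definition level :: "fuzzy \<Rightarrow> real \<Rightarrow> real set" where
  "level X a = (if 0 < a then {t. X t \<ge> a} else closure {t. X t > 0})"

definition lower :: "fuzzy \<Rightarrow> real \<Rightarrow> real" where
  "lower X a = Inf (level X a)"

definition upper :: "fuzzy \<Rightarrow> real \<Rightarrow> real" where
  "upper X a = Sup (level X a)"

text \<open>Subtraction of fuzzy numbers via Zadeh's extension principle; for fuzzy numbers
  its level sets are [u1 - v2, v1 - u2].\<close>
definition fsub :: "fuzzy \<Rightarrow> fuzzy \<Rightarrow> fuzzy" where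
  "fsub X Y = (\<lambda>t. Sup {min (X a) (Y b) | a b. a - b = t})"

definition fdist :: "fuzzy \<Rightarrow> fuzzy \<Rightarrow> real" where
  "fdist X Y = (SUP a\<in>{0..1}. max \<bar>lower X a - lower Y a\<bar> \<bar>upper X a - upper Y a\<bar>)"

fun fdelta :: "nat \<Rightarrow> (nat \<Rightarrow> fuzzy) \<Rightarrow> nat \<Rightarrow> fuzzy" where
  "fdelta 0 X k = X k"
| "fdelta (Suc m) X k = fsub (fdelta m X k) (fdelta m X (Suc k))"

definition lacunary :: "(nat \<Rightarrow> nat) \<Rightarrow> bool" where
  "lacunary \<theta> \<longleftrightarrow> strict_mono \<theta> \<and> \<theta> 0 = 0 \<and>
     filterlim (\<lambda>r. \<theta> r - \<theta> (r - 1)) at_top sequentially"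

definition hr :: "(nat \<Rightarrow> nat) \<Rightarrow> nat \<Rightarrow> nat" where
  "hr \<theta> r = \<theta> r - \<theta> (r - 1)"

definition Ir :: "(nat \<Rightarrow> nat) \<Rightarrow> nat \<Rightarrow> nat set" where
  "Ir \<theta> r = {\<theta> (r - 1)<..\<theta> r}"

definition fuzzy_seq :: "(nat \<Rightarrow> fuzzy) \<Rightarrow> bool" where
  "fuzzy_seq X \<longleftrightarrow> (\<forall>k. fuzzy_number (X k))"

definition stat_conv :: "real \<Rightarrow> (nat \<Rightarrow> nat) \<Rightarrow> nat \<Rightarrow> (nat \<Rightarrow> fuzzy) \<Rightarrow> fuzzy \<Rightarrow> bool" where
  "stat_conv \<gamma> \<theta> m X X0 \<longleftrightarrow>
     (\<forall>\<epsilon>>0. (\<lambda>r. real (card {k \<in> Ir \<theta> r. fdist (fdelta m X k) X0 \<ge> \<epsilon>}) / real (hr \<theta> r) powr \<gamma>)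
              \<longlonglongrightarrow> 0)"

definition strong_conv :: "real \<Rightarrow> real \<Rightarrow> (nat \<Rightarrow> nat) \<Rightarrow> nat \<Rightarrow> (nat \<Rightarrow> fuzzy) \<Rightarrow> fuzzy \<Rightarrow> bool" where
  "strong_conv \<beta> p \<theta> m X X0 \<longleftrightarrow>
     (\<lambda>r. (\<Sum>k\<in>Ir \<theta> r. fdist (fdelta m X k) X0 powr p) / real (hr \<theta> r) powr \<beta>) \<longlonglongrightarrow> 0"

definition S_theta :: "real \<Rightarrow> (nat \<Rightarrow> nat) \<Rightarrow> nat \<Rightarrow> (nat \<Rightarrow> fuzzy) set" where
  "S_theta \<gamma> \<theta> m = {X. fuzzy_seq X \<and> (\<exists>X0. fuzzy_number X0 \<and> stat_conv \<gamma> \<theta> m X X0)}"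

definition N_theta :: "real \<Rightarrow> real \<Rightarrow> (nat \<Rightarrow> nat) \<Rightarrow> nat \<Rightarrow> (nat \<Rightarrow> fuzzy) set" where
  "N_theta \<beta> p \<theta> m = {X. fuzzy_seq X \<and> (\<exists>X0. fuzzy_number X0 \<and> strong_conv \<beta> p \<theta> m X X0)}"

end

theory Submission
  imports Defs
begin

text \<open>Strong summability gives statistical convergence by a Markov-type count: in each
  block the number of indices at distance at least \<open>\<epsilon>\<close> is at most the p-th power sum
  divided by \<open>\<epsilon> powr p\<close>, and \<open>h\<^sub>r powr \<beta> \<le> h\<^sub>r powr \<gamma>\<close>.
  The inclusion is in fact strict for all \<open>0 < \<beta> \<le> \<gamma> \<le> 1\<close>. Embed the reals as crisp
  fuzzy numbers and take a sequence whose m-th differences vanish except at the block endpoints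
  \<open>k\<^sub>r\<close>, where they equal \<open>2 (k\<^sub>r + 1) powr (1/p)\<close>. One exceptional index per block
  keeps the sequence statistically convergent to 0, while against any candidate limit that single
  term contributes at least \<open>k\<^sub>r + 1 \<ge> h\<^sub>r \<ge> h\<^sub>r powr \<beta>\<close> to the p-th power sum.\<close>

lemma card_ge_times_powr_le_sum_powr:
  fixes f :: "'a \<Rightarrow> real"
  assumes "finite I" "0 < \<epsilon>" "0 \<le> p"
  shows "real (card {k \<in> I. \<epsilon> \<le> f k}) * \<epsilon> powr p \<le> (\<Sum>k\<in>I. f k powr p)"
proof -
  have "real (card {k \<in> I. \<epsilon> \<le> f k}) * \<epsilon> powr p = (\<Sum>k\<in>{k \<in> I. \<epsilon> \<le> f k}. \<epsilon> powr p)"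
    by simp
  also have "\<dots> \<le> (\<Sum>k\<in>{k \<in> I. \<epsilon> \<le> f k}. f k powr p)"
    using assms by (intro sum_mono powr_mono2) auto
  also have "\<dots> \<le> (\<Sum>k\<in>I. f k powr p)"
    using assms(1) by (intro sum_mono2) auto
  finally show ?thesis .
qed

lemma finite_Ir [simp]: "finite (Ir \<theta> r)"
  by (simp add: Ir_def)

lemma strong_conv_imp_stat_conv:
  assumes "\<beta> \<le> \<gamma>" "0 < p" "strong_conv \<beta> p \<theta> m X X0"
  shows "stat_conv \<gamma> \<theta> m X X0"
  unfolding stat_conv_def
proof (intro allI impI)
  fix \<epsilon> :: real
  assume "0 < \<epsilon>"
  define d where "d k = fdist (fdelta m X k) X0" for k
  define h where "h r = real (hr \<theta> r)" for r
  define S where "S r = (\<Sum>k\<in>Ir \<theta> r. d k powr p) / h r powr \<beta>" for r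
  have "S \<longlonglongrightarrow> 0"
    using assms(3) unfolding strong_conv_def S_def[abs_def] d_def h_def .
  then have lim: "(\<lambda>r. S r / \<epsilon> powr p) \<longlonglongrightarrow> 0"
    by (rule tendsto_divide_zero)
  have bound: "real (card {k \<in> Ir \<theta> r. \<epsilon> \<le> d k}) / h r powr \<gamma> \<le> S r / \<epsilon> powr p" for r
  proof (cases "h r = 0")
    case True
    then show ?thesis by (simp add: S_def)
  next
    case False
    then have h_pos: "0 < h r powr \<beta>" and "1 \<le> h r"
      by (auto simp: h_def)
    have "h r powr \<beta> \<le> h r powr \<gamma>"
      using \<open>1 \<le> h r\<close> assms(1) by (simp add: powr_mono)
    then have "real (card {k \<in> Ir \<theta> r. \<epsilon> \<le> d k}) / h r powr \<gamma>
        \<le> real (card {k \<in> Ir \<theta> r. \<epsilon> \<le> d k}) / h r powr \<beta>"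
      using h_pos by (intro divide_left_mono) auto
    also have "\<dots> \<le> (\<Sum>k\<in>Ir \<theta> r. d k powr p) / \<epsilon> powr p / h r powr \<beta>"
      using card_ge_times_powr_le_sum_powr[of "Ir \<theta> r" \<epsilon> p d] \<open>0 < \<epsilon>\<close> assms(2) h_pos
      by (intro divide_right_mono) (auto simp: field_simps)
    finally show ?thesis
      by (simp add: S_def field_simps)
  qed
  show "(\<lambda>r. real (card {k \<in> Ir \<theta> r. \<epsilon> \<le> fdist (fdelta m X k) X0}) / real (hr \<theta> r) powr \<gamma>)
      \<longlonglongrightarrow> 0"
    using bound by (intro tendsto_sandwich[OF _ _ tendsto_const lim]) (auto simp: d_def h_def)
qed

lemma N_theta_subset_S_theta:
  assumes "\<beta> \<le> \<gamma>" "0 < p"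
  shows "N_theta \<beta> p \<theta> m \<subseteq> S_theta \<gamma> \<theta> m"
  using strong_conv_imp_stat_conv[OF assms] unfolding N_theta_def S_theta_def by blast

lemma level_subset_support: "level X \<alpha> \<subseteq> closure {t. X t > 0}"
  using closure_subset[of "{t. X t > 0}"] by (auto simp: level_def)

lemma mem_level: "X t = 1 \<Longrightarrow> \<alpha> \<le> 1 \<Longrightarrow> t \<in> level X \<alpha>"
  using closure_subset[of "{t. X t > 0}"] by (auto simp: level_def)

lemma fuzzy_number_lower_upper_bounded:
  assumes "fuzzy_number X"
  obtains B where "\<And>\<alpha>. \<alpha> \<le> 1 \<Longrightarrow> \<bar>lower X \<alpha>\<bar> \<le> B \<and> \<bar>upper X \<alpha>\<bar> \<le> B"
proof -
  have "bounded (closure {t. X t > 0})"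
    using assms by (simp add: fuzzy_number_def compact_imp_bounded)
  then obtain B where B: "\<And>x. x \<in> closure {t. X t > 0} \<Longrightarrow> \<bar>x\<bar> \<le> B"
    unfolding bounded_real by blast
  obtain t where "X t = 1"
    using assms by (auto simp: fuzzy_number_def)
  have "\<bar>lower X \<alpha>\<bar> \<le> B \<and> \<bar>upper X \<alpha>\<bar> \<le> B" if "\<alpha> \<le> 1" for \<alpha>
  proof -
    have "level X \<alpha> \<noteq> {}"
      using mem_level[of X t \<alpha>] \<open>X t = 1\<close> that by blast
    moreover have "\<bar>x\<bar> \<le> B" if "x \<in> level X \<alpha>" for x
      using B level_subset_support that by blast
    ultimately show ?thesis
      unfolding lower_def upper_def by (intro conjI cInf_abs_ge cSup_abs_le)
  qed
  then show thesis
    by (rule that)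
qed

lemma lower_dist_le_fdist:
  assumes "fuzzy_number X" "fuzzy_number Y" "\<alpha> \<in> {0..1}"
  shows "\<bar>lower X \<alpha> - lower Y \<alpha>\<bar> \<le> fdist X Y"
proof -
  obtain BX where BX: "\<And>\<alpha>. \<alpha> \<le> 1 \<Longrightarrow> \<bar>lower X \<alpha>\<bar> \<le> BX \<and> \<bar>upper X \<alpha>\<bar> \<le> BX"
    using fuzzy_number_lower_upper_bounded[OF assms(1)] by blast
  obtain BY where BY: "\<And>\<alpha>. \<alpha> \<le> 1 \<Longrightarrow> \<bar>lower Y \<alpha>\<bar> \<le> BY \<and> \<bar>upper Y \<alpha>\<bar> \<le> BY"
    using fuzzy_number_lower_upper_bounded[OF assms(2)] by blast
  define f where "f \<alpha> = max \<bar>lower X \<alpha> - lower Y \<alpha>\<bar> \<bar>upper X \<alpha> - upper Y \<alpha>\<bar>" for \<alpha>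
  have "f \<alpha> \<le> BX + BY" if "\<alpha> \<in> {0..1}" for \<alpha>
    using BX[of \<alpha>] BY[of \<alpha>] that unfolding f_def by auto
  then have "bdd_above (f ` {0..1})"
    by (rule bdd_aboveI2)
  then have "f \<alpha> \<le> (SUP \<alpha>\<in>{0..1}. f \<alpha>)"
    using assms(3) by (rule cSUP_upper2) simp
  then show ?thesis
    by (simp add: fdist_def f_def)
qed

definition crisp :: "real \<Rightarrow> fuzzy" where
  "crisp a = (\<lambda>t. if t = a then 1 else 0)"

lemma usc_crisp: "usc (crisp a)"
  unfolding usc_def
proof (intro allI impI)
  fix t c
  assume c: "crisp a t < c"
  show "\<forall>\<^sub>F s in at t. crisp a s < c"
  proof (cases "t = a")
    case True
    then show ?thesis using c by (auto simp: crisp_def intro!: always_eventually)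
  next
    case False
    have "\<forall>\<^sub>F s in at t. s \<noteq> a"
      by (rule eventually_neq_at_within)
    then show ?thesis
      by (rule eventually_mono) (use c False in \<open>auto simp: crisp_def\<close>)
  qed
qed

lemma fuzzy_number_crisp: "fuzzy_number (crisp a)"
proof -
  have convex: "min (crisp a x) (crisp a y) \<le> crisp a (l * x + (1 - l) * y)" for x y l
  proof (cases "x = a \<and> y = a")
    case True
    then have "l * x + (1 - l) * y = a" by (simp add: algebra_simps)
    then show ?thesis by (simp add: crisp_def)
  qed (auto simp: crisp_def)
  have support: "{t. crisp a t > 0} = {a}"
    by (auto simp: crisp_def)
  show ?thesis
    unfolding fuzzy_number_def support using convex usc_crisp
    by (auto simp: crisp_def)
qed

lemma level_crisp:
  assumes "0 \<le> \<alpha>" "\<alpha> \<le> 1"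
  shows "level (crisp a) \<alpha> = {a}"
proof -
  have "{t. crisp a t > 0} = {a}" "0 < \<alpha> \<Longrightarrow> {t. crisp a t \<ge> \<alpha>} = {a}"
    using assms(2) by (auto simp: crisp_def)
  then show ?thesis
    by (simp add: level_def)
qed

lemma lower_crisp: "0 \<le> \<alpha> \<Longrightarrow> \<alpha> \<le> 1 \<Longrightarrow> lower (crisp a) \<alpha> = a"
  by (simp add: lower_def level_crisp)

lemma upper_crisp: "0 \<le> \<alpha> \<Longrightarrow> \<alpha> \<le> 1 \<Longrightarrow> upper (crisp a) \<alpha> = a"
  by (simp add: upper_def level_crisp)

lemma fdist_crisp: "fdist (crisp a) (crisp b) = \<bar>a - b\<bar>"
proof -
  have "fdist (crisp a) (crisp b) = (SUP x\<in>{0..(1::real)}. \<bar>a - b\<bar>)"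
    unfolding fdist_def by (rule SUP_cong) (auto simp: lower_crisp upper_crisp)
  then show ?thesis by simp
qed

lemma fsub_crisp: "fsub (crisp a) (crisp b) = crisp (a - b)"
proof
  fix t
  let ?S = "{min (crisp a x) (crisp b y) | x y. x - y = t}"
  have le_1: "\<forall>s\<in>?S. s \<le> 1"
    by (auto simp: crisp_def)
  show "fsub (crisp a) (crisp b) t = crisp (a - b) t"
  proof (cases "t = a - b")
    case True
    have "min (crisp a a) (crisp b b) = 1"
      by (simp add: crisp_def)
    with True have "1 \<in> ?S"
      by (metis (mono_tags, lifting) mem_Collect_eq)
    then have "Sup ?S = 1"
      using le_1 by (intro cSup_eq_maximum) auto
    then show ?thesis
      using True by (simp add: fsub_def crisp_def)
  next
    case False
    have S_sub: "?S \<subseteq> {0}"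
    proof
      fix s
      assume "s \<in> ?S"
      then obtain x y where s: "s = min (crisp a x) (crisp b y)" and "x - y = t"
        by blast
      with False have "x \<noteq> a \<or> y \<noteq> b"
        by auto
      then show "s \<in> {0}"
        by (auto simp: s crisp_def)
    qed
    have "min (crisp a (t + b)) (crisp b b) = 0" "(t + b) - b = t"
      using False by (auto simp: crisp_def)
    then have "0 \<in> ?S"
      by (metis (mono_tags, lifting) mem_Collect_eq)
    with S_sub have "?S = {0}"
      by blast
    then show ?thesis
      using False by (simp add: fsub_def crisp_def)
  qed
qed

fun rdelta :: "nat \<Rightarrow> (nat \<Rightarrow> real) \<Rightarrow> nat \<Rightarrow> real" where
  "rdelta 0 x k = x k"
| "rdelta (Suc m) x k = rdelta m x k - rdelta m x (Suc k)"

lemma fdelta_crisp: "fdelta m (\<lambda>k. crisp (x k)) k = crisp (rdelta m x k)"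
  by (induction m arbitrary: k) (simp_all add: fsub_crisp)

definition antidiff :: "(nat \<Rightarrow> real) \<Rightarrow> nat \<Rightarrow> real" where
  "antidiff x k = - (\<Sum>j<k. x j)"

lemma rdelta_antidiff_iter: "rdelta m ((antidiff ^^ m) x) k = x k"
proof (induction m arbitrary: x k)
  case 0
  then show ?case by simp
next
  case (Suc m)
  have "(antidiff ^^ Suc m) x = (antidiff ^^ m) (antidiff x)"
    by (simp add: funpow_Suc_right del: funpow.simps)
  moreover have "antidiff x k - antidiff x (Suc k) = x k"
    by (simp add: antidiff_def)
  ultimately show ?case
    using Suc.IH[of "antidiff x"] by simp
qed

lemma fdelta_crisp_antidiff_iter:
  "fdelta m (\<lambda>k. crisp ((antidiff ^^ m) a k)) k = crisp (a k)"
  by (simp add: fdelta_crisp rdelta_antidiff_iter)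

lemma Ir_inter_range_subset:
  assumes "strict_mono \<theta>"
  shows "Ir \<theta> r \<inter> range \<theta> \<subseteq> {\<theta> r}"
proof
  fix k
  assume "k \<in> Ir \<theta> r \<inter> range \<theta>"
  then obtain j where "k = \<theta> j" "\<theta> (r - 1) < \<theta> j" "\<theta> j \<le> \<theta> r"
    by (auto simp: Ir_def)
  with assms have "r - 1 < j" "j \<le> r"
    by (simp_all add: strict_mono_less strict_mono_less_eq)
  then have "j = r"
    by linarith
  with \<open>k = \<theta> j\<close> show "k \<in> {\<theta> r}"
    by simp
qed

lemma hr_tendsto_at_top:
  assumes "lacunary \<theta>"
  shows "filterlim (\<lambda>r. real (hr \<theta> r)) at_top sequentially"
proof -
  have "filterlim (hr \<theta>) at_top sequentially"
    using assms unfolding lacunary_def hr_def[abs_def] by simp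
  from filterlim_compose[OF filterlim_real_sequentially this] show ?thesis
    by simp
qed

lemma stat_conv_crisp_supported_on_range:
  assumes "lacunary \<theta>" "0 < \<gamma>"
    and "\<And>k. a k \<noteq> 0 \<Longrightarrow> k \<in> range \<theta>"
    and "\<And>k. fdelta m X k = crisp (a k)"
  shows "stat_conv \<gamma> \<theta> m X (crisp 0)"
  unfolding stat_conv_def
proof (intro allI impI)
  fix \<epsilon> :: real
  assume "0 < \<epsilon>"
  define C where "C r = {k \<in> Ir \<theta> r. \<epsilon> \<le> fdist (fdelta m X k) (crisp 0)}" for r
  have lim: "(\<lambda>r. real (hr \<theta> r) powr - \<gamma>) \<longlonglongrightarrow> 0"
    using hr_tendsto_at_top[OF assms(1)] assms(2) by (intro tendsto_neg_powr) auto
  have "real (card (C r)) / real (hr \<theta> r) powr \<gamma> \<le> real (hr \<theta> r) powr - \<gamma>" for r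
  proof -
    have "C r \<subseteq> Ir \<theta> r \<inter> range \<theta>"
      using assms(3,4) \<open>0 < \<epsilon>\<close> by (auto simp: C_def fdist_crisp)
    also have "\<dots> \<subseteq> {\<theta> r}"
      using assms(1) Ir_inter_range_subset by (simp add: lacunary_def)
    finally have "card (C r) \<le> card {\<theta> r}"
      by (rule card_mono[rotated]) simp
    then have "real (card (C r)) / real (hr \<theta> r) powr \<gamma> \<le> 1 / real (hr \<theta> r) powr \<gamma>"
      by (intro divide_right_mono) auto
    then show ?thesis
      by (simp add: powr_minus_divide)
  qed
  then have "(\<lambda>r. real (card (C r)) / real (hr \<theta> r) powr \<gamma>) \<longlonglongrightarrow> 0"
    by (intro tendsto_sandwich[OF _ _ tendsto_const lim] always_eventually allI) simp_all
  then show "(\<lambda>r. real (card {k \<in> Ir \<theta> r. \<epsilon> \<le> fdist (fdelta m X k) (crisp 0)})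
      / real (hr \<theta> r) powr \<gamma>) \<longlonglongrightarrow> 0"
    by (simp add: C_def)
qed

definition endpoint_spikes :: "real \<Rightarrow> (nat \<Rightarrow> nat) \<Rightarrow> nat \<Rightarrow> real" where
  "endpoint_spikes p \<theta> k = (if k \<in> range \<theta> then 2 * real (k + 1) powr (1 / p) else 0)"

lemma fdist_endpoint_spike_powr_ge:
  assumes "0 < p" "fuzzy_number X0" "k \<in> range \<theta>"
    and "\<bar>lower X0 1\<bar> powr p \<le> real (k + 1)"
  shows "real (k + 1) \<le> fdist (crisp (endpoint_spikes p \<theta> k)) X0 powr p"
proof -
  define y where "y = real (k + 1) powr (1 / p)"
  have "y > 0"
    by (simp add: y_def)
  have y_powr: "y powr p = real (k + 1)"
    using assms(1) by (simp add: y_def powr_powr)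
  have "\<bar>lower X0 1\<bar> = (\<bar>lower X0 1\<bar> powr p) powr (1 / p)"
    using assms(1) by (simp add: powr_powr)
  also have "\<dots> \<le> y"
    unfolding y_def using assms(1,4) by (intro powr_mono2) auto
  finally have "y \<le> \<bar>lower (crisp (2 * y)) 1 - lower X0 1\<bar>"
    by (simp add: lower_crisp)
  also have "\<dots> \<le> fdist (crisp (2 * y)) X0"
    using fuzzy_number_crisp assms(2) by (rule lower_dist_le_fdist) simp
  finally have "y powr p \<le> fdist (crisp (2 * y)) X0 powr p"
    using \<open>y > 0\<close> assms(1) by (intro powr_mono2) auto
  then show ?thesis
    using assms(3) unfolding y_powr by (simp add: endpoint_spikes_def y_def)
qed

lemma not_strong_conv_endpoint_spikes:
  assumes "lacunary \<theta>" "0 < p" "\<beta> \<le> 1" "fuzzy_number X0"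
    and "\<And>k. fdelta m X k = crisp (endpoint_spikes p \<theta> k)"
  shows "\<not> strong_conv \<beta> p \<theta> m X X0"
proof
  define d where "d k = fdist (fdelta m X k) X0" for k
  define h where "h r = real (hr \<theta> r)" for r
  assume "strong_conv \<beta> p \<theta> m X X0"
  then have "(\<lambda>r. (\<Sum>k\<in>Ir \<theta> r. d k powr p) / h r powr \<beta>) \<longlonglongrightarrow> 0"
    by (simp add: strong_conv_def d_def h_def)
  then have "\<forall>\<^sub>F r in sequentially. (\<Sum>k\<in>Ir \<theta> r. d k powr p) / h r powr \<beta> < 1"
    by (rule order_tendstoD) simp
  moreover have "\<forall>\<^sub>F r in sequentially. max 1 (\<bar>lower X0 1\<bar> powr p) \<le> h r"
    using hr_tendsto_at_top[OF assms(1)] unfolding h_def filterlim_at_top by blast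
  moreover have "\<forall>\<^sub>F r in sequentially. 1 \<le> r"
    by (rule eventually_ge_at_top)
  ultimately have "\<forall>\<^sub>F r in sequentially. (\<Sum>k\<in>Ir \<theta> r. d k powr p) / h r powr \<beta> < 1
      \<and> max 1 (\<bar>lower X0 1\<bar> powr p) \<le> h r \<and> 1 \<le> r"
    by (intro eventually_conj)
  then obtain r where Q_lt: "(\<Sum>k\<in>Ir \<theta> r. d k powr p) / h r powr \<beta> < 1"
    and h_ge: "max 1 (\<bar>lower X0 1\<bar> powr p) \<le> h r" and "1 \<le> r"
    unfolding eventually_sequentially by blast
  have "0 < h r powr \<beta>"
    using h_ge by simp
  have "h r \<le> real (\<theta> r + 1)"
    by (simp add: h_def hr_def)
  have "\<theta> r \<in> Ir \<theta> r"
    using assms(1) \<open>1 \<le> r\<close> by (auto simp: Ir_def lacunary_def strict_mono_less)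
  have "h r powr \<beta> \<le> h r"
    using h_ge assms(3) powr_mono[of \<beta> 1 "h r"] by simp
  also have "\<dots> \<le> d (\<theta> r) powr p"
    using fdist_endpoint_spike_powr_ge[OF assms(2,4), of "\<theta> r" \<theta>] h_ge \<open>h r \<le> real (\<theta> r + 1)\<close>
    by (simp add: d_def assms(5))
  also have "\<dots> \<le> (\<Sum>k\<in>Ir \<theta> r. d k powr p)"
    using \<open>\<theta> r \<in> Ir \<theta> r\<close> by (intro member_le_sum) auto
  finally show False
    using Q_lt \<open>0 < h r powr \<beta>\<close> by (simp add: divide_less_eq)
qed

lemma N_theta_psubset_S_theta:
  assumes "0 < \<beta>" "\<beta> \<le> \<gamma>" "\<gamma> \<le> 1" "lacunary \<theta>" "0 < p"
  shows "N_theta \<beta> p \<theta> m \<subset> S_theta \<gamma> \<theta> m"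
proof -
  define X where "X k = crisp ((antidiff ^^ m) (endpoint_spikes p \<theta>) k)" for k
  have X_diff: "fdelta m X k = crisp (endpoint_spikes p \<theta> k)" for k
    unfolding X_def by (rule fdelta_crisp_antidiff_iter)
  have "fuzzy_seq X"
    by (simp add: fuzzy_seq_def X_def fuzzy_number_crisp)
  moreover have "stat_conv \<gamma> \<theta> m X (crisp 0)"
    using assms by (intro stat_conv_crisp_supported_on_range[OF assms(4) _ _ X_diff])
      (auto simp: endpoint_spikes_def split: if_splits)
  moreover have "X \<notin> N_theta \<beta> p \<theta> m"
    using not_strong_conv_endpoint_spikes[OF assms(4,5) _ _ X_diff] assms(2,3)
    by (auto simp: N_theta_def)
  ultimately show ?thesis
    using N_theta_subset_S_theta[OF assms(2,5)] fuzzy_number_crisp unfolding S_theta_def by blast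
qed

theorem theorem2p7:
  fixes \<beta> \<gamma> p :: real and m :: nat and \<theta> :: "nat \<Rightarrow> nat"
  assumes "0 < \<beta>" "\<beta> \<le> \<gamma>" "\<gamma> \<le> 1"
    and "lacunary \<theta>"
    and "0 < p"
  shows "N_theta \<beta> p \<theta> m \<subseteq> S_theta \<gamma> \<theta> m
    \<and> (\<forall>X X0. fuzzy_seq X \<longrightarrow> fuzzy_number X0 \<longrightarrow> strong_conv \<beta> p \<theta> m X X0
          \<longrightarrow> stat_conv \<gamma> \<theta> m X X0)
    \<and> (\<exists>\<beta>' \<gamma>'. 0 < \<beta>' \<and> \<beta>' \<le> \<gamma>' \<and> \<gamma>' \<le> 1 \<and> N_theta \<beta>' p \<theta> m \<subset> S_theta \<gamma>' \<theta> m)"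
  using N_theta_psubset_S_theta[OF assms] strong_conv_imp_stat_conv[OF assms(2,5)] assms(1-3)
  by blast

end
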